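(* Let $n=3$ and let $X_1,X_2,X_3$ be nonnegative random variables with no ties; write $p_{ijk}=\Pr(X_i<X_j<X_k)$. Then $q(A)=1/\binom{3}{|A|}$ for all $A\subseteq[3]$ if and only if there is $\lambda\in[0,1]$ with $(p_{123},p_{132},p_{213},p_{231},p_{312},p_{321})=(\lambda,1-\lambda,1-\lambda,\lambda,\lambda,1-\lambda)/3$; whereas $q_j(A)=1/(3\binom{2}{|A|})$ for all $j\in[3]$, $A\subseteq[3]\setminus\{j\}$ if and only if $p_{ijk}=1/6$ for every permutation $(i,j,k)$ of $(1,2,3)$. In particular, symmetry of $q$ does not imply the latter condition.
   Context: No ties: $\Pr(X_i=X_k)=0$ for $i\neq k$. $q(A)=\Pr\big(\max_{i\notin A}X_i<\min_{i\in A}X_i\big)$; $q_j(A)=\Pr\big(\max_{i\notin A\cup\{j\}}X_i<X_j<\min_{i\in A}X_i\big)$ for $A\subseteq[n]\setminus\{j\}$ (empty max $=-\infty$, empty min $=+\infty$). *)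

theory Defs
  imports "HOL-Probability.Probability"
begin

text \<open>Random variables are indexed by 1..n; [n] = {1..n}.
  q(A) = Pr(max_{i notin A} X_i < min_{i in A} X_i), with empty max = -infinity and
  empty min = +infinity, written out as: every X_i (i in [n]-A) is below every X_k (k in A).\<close>

definition qset :: "'a measure \<Rightarrow> (nat \<Rightarrow> 'a \<Rightarrow> real) \<Rightarrow> nat \<Rightarrow> nat set \<Rightarrow> real" where
  "qset M X n A = measure M {\<omega> \<in> space M.
      \<forall>i\<in>{1..n} - A. \<forall>k\<in>A. X i \<omega> < X k \<omega>}"

definition qj :: "'a measure \<Rightarrow> (nat \<Rightarrow> 'a \<Rightarrow> real) \<Rightarrow> nat \<Rightarrow> nat \<Rightarrow> nat set \<Rightarrow> real" where
  "qj M X n j A = measure M {\<omega> \<in> space M.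
      (\<forall>i\<in>{1..n} - (A \<union> {j}). X i \<omega> < X j \<omega>) \<and> (\<forall>k\<in>A. X j \<omega> < X k \<omega>)}"

definition pord :: "'a measure \<Rightarrow> (nat \<Rightarrow> 'a \<Rightarrow> real) \<Rightarrow> nat \<Rightarrow> nat \<Rightarrow> nat \<Rightarrow> real" where
  "pord M X i j k = measure M {\<omega> \<in> space M. X i \<omega> < X j \<omega> \<and> X j \<omega> < X k \<omega>}"

end

theory Submission
  imports Defs
begin

text \<open>
  Without ties, the events "X_i < X_j < X_k" for the six orderings of
  three random variables partition the sample space up to a null set.  Every event
  occurring in q(A) and q_j(A) for n = 3 is (almost surely) a union of at most two of
  these ordering events, so each q(A) and q_j(A) is a sum of at most two of the six
  numbers p_{ijk}.  Both equivalences of the theorem thereby become statements about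
  small linear systems in the six p's.
\<close>

lemma measure_AE_disjoint_union:
  assumes "prob_space M" "A \<in> sets M" "B \<in> sets M" "C \<in> sets M" "A \<inter> B = {}"
    and "AE x in M. x \<in> C \<longleftrightarrow> x \<in> A \<or> x \<in> B"
  shows "measure M C = measure M A + measure M B"
proof -
  interpret prob_space M by fact
  have "measure M C = measure M (A \<union> B)"
    by (rule finite_measure_eq_AE) (use assms in auto)
  also have "\<dots> = measure M A + measure M B"
    by (rule finite_measure_Union) (use assms in auto)
  finally show ?thesis .
qed

lemma prob_max_of_three:
  assumes "prob_space M"
    and [measurable]: "X i \<in> borel_measurable M" "X j \<in> borel_measurable M"
      "X k \<in> borel_measurable M"
    and distinct_jk: "AE \<omega> in M. X j \<omega> \<noteq> X k \<omega>"
  shows "measure M {\<omega> \<in> space M. X j \<omega> < X i \<omega> \<and> X k \<omega> < X i \<omega>}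
           = pord M X j k i + pord M X k j i"
  unfolding pord_def
  by (rule measure_AE_disjoint_union, fact, measurable, auto)
     (use distinct_jk in eventually_elim, auto)

lemma prob_min_of_three:
  assumes "prob_space M"
    and [measurable]: "X i \<in> borel_measurable M" "X j \<in> borel_measurable M"
      "X k \<in> borel_measurable M"
    and distinct_jk: "AE \<omega> in M. X j \<omega> \<noteq> X k \<omega>"
  shows "measure M {\<omega> \<in> space M. X i \<omega> < X j \<omega> \<and> X i \<omega> < X k \<omega>}
           = pord M X i j k + pord M X i k j"
  unfolding pord_def
  by (rule measure_AE_disjoint_union, fact, measurable, auto)
     (use distinct_jk in eventually_elim, auto)

lemma one_to_three: "{1..3::nat} = {1, 2, 3}" by auto

text \<open>The six orderings of {1,2,3}, in the form used to instantiate per-permutation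
  lemmas.\<close>

lemma permutations_one_to_three:
  "{1, 2, 3} = {1..3::nat}" "{2, 1, 3} = {1..3::nat}" "{3, 1, 2} = {1..3::nat}"
  "{1, 3, 2} = {1..3::nat}" "{2, 3, 1} = {1..3::nat}" "{3, 2, 1} = {1..3::nat}"
  unfolding one_to_three by auto

lemma ball_one_to_three: "(\<forall>j\<in>{1..3::nat}. P j) \<longleftrightarrow> P 1 \<and> P 2 \<and> P 3"
  unfolding one_to_three by simp

lemma all_subsets_of_three:
  "(\<forall>A. A \<subseteq> {a, b, c} \<longrightarrow> P A) \<longleftrightarrow>
     P {} \<and> P {a} \<and> P {b} \<and> P {c} \<and> P {b, c} \<and> P {a, c} \<and> P {a, b} \<and> P {a, b, c}"
proof -
  have "(\<forall>A. A \<subseteq> {a, b, c} \<longrightarrow> P A) \<longleftrightarrow> (\<forall>A\<in>Pow {a, b, c}. P A)" by auto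
  then show ?thesis by (auto simp: Pow_insert insert_commute)
qed

lemma all_subsets_of_two:
  "(\<forall>A. A \<subseteq> {a, b} \<longrightarrow> P A) \<longleftrightarrow> P {} \<and> P {a} \<and> P {b} \<and> P {a, b}"
proof -
  have "(\<forall>A. A \<subseteq> {a, b} \<longrightarrow> P A) \<longleftrightarrow> (\<forall>A\<in>Pow {a, b}. P A)" by auto
  then show ?thesis by (auto simp: Pow_insert)
qed

lemma all_permutations_of_three:
  "(\<forall>i j k. {i, j, k} = {1..3::nat} \<longrightarrow> P i j k) \<longleftrightarrow>
     P 1 2 3 \<and> P 1 3 2 \<and> P 2 1 3 \<and> P 2 3 1 \<and> P 3 1 2 \<and> P 3 2 1"
proof -
  have "{i, j, k} = {1..3::nat} \<longleftrightarrow>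
      (i, j, k) \<in> {(1,2,3), (1,3,2), (2,1,3), (2,3,1), (3,1,2), (3,2,1)}" for i j k
    unfolding one_to_three
  proof
    assume "{i, j, k} = {1, 2, 3::nat}"
    then have "i = 1 \<or> i = 2 \<or> i = 3" "j = 1 \<or> j = 2 \<or> j = 3" "k = 1 \<or> k = 2 \<or> k = 3"
      and "1 \<in> {i, j, k}" "2 \<in> {i, j, k}" "3 \<in> {i, j, k}" by blast+
    then show "(i, j, k) \<in> {(1,2,3), (1,3,2), (2,1,3), (2,3,1), (3,1,2), (3,2,1)}"
      by (elim disjE) simp_all
  qed auto
  then show ?thesis by simp blast
qed

lemma pair_sums_third_iff:
  fixes a b c d e f :: real
  assumes "0 \<le> a" "0 \<le> b"
  shows "(d + f = 1/3 \<and> b + e = 1/3 \<and> a + c = 1/3 \<and> e + f = 1/3 \<and> c + d = 1/3 \<and> a + b = 1/3)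
    \<longleftrightarrow> (\<exists>l. 0 \<le> l \<and> l \<le> 1 \<and> a = l/3 \<and> b = (1 - l)/3 \<and> c = (1 - l)/3 \<and>
             d = l/3 \<and> e = l/3 \<and> f = (1 - l)/3)"
  (is "?sums \<longleftrightarrow> (\<exists>l. ?family l)")
proof
  assume ?sums
  with assms have "?family (3 * a)"
    by (elim conjE) (simp add: field_simps)
  then show "\<exists>l. ?family l" ..
next
  assume "\<exists>l. ?family l"
  then show ?sums by (elim exE conjE) simp
qed

locale three_no_ties = prob_space M for M :: "'a measure" +
  fixes X :: "nat \<Rightarrow> 'a \<Rightarrow> real"
  assumes measurable_X: "i \<in> {1..3} \<Longrightarrow> X i \<in> borel_measurable M"
    and no_ties: "\<lbrakk>i \<in> {1..3}; k \<in> {1..3}; i \<noteq> k\<rbrakk> \<Longrightarrow>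
                   measure M {\<omega> \<in> space M. X i \<omega> = X k \<omega>} = 0"
begin

lemma AE_no_tie:
  assumes "i \<in> {1..3}" "k \<in> {1..3}" "i \<noteq> k"
  shows "AE \<omega> in M. X i \<omega> \<noteq> X k \<omega>"
proof (rule AE_I')
  have [measurable]: "X i \<in> borel_measurable M" "X k \<in> borel_measurable M"
    using measurable_X assms by auto
  have "{\<omega> \<in> space M. X i \<omega> = X k \<omega>} \<in> sets M" by measurable
  then show "{\<omega> \<in> space M. X i \<omega> = X k \<omega>} \<in> null_sets M"
    using no_ties[OF assms] by (simp add: null_sets_def emeasure_eq_measure)
qed auto

lemma qset_empty: "qset M X n {} = 1"
  and qset_all: "qset M X n {1..n} = 1"
  unfolding qset_def by (simp_all add: prob_space)

context
  fixes i j k :: nat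
  assumes perm: "{i, j, k} = {1..3}"
begin

private lemma distinct: "i \<noteq> j" "i \<noteq> k" "j \<noteq> k"
proof -
  have "card {i, j, k} = 3" by (simp add: perm)
  then show "i \<noteq> j" "i \<noteq> k" "j \<noteq> k" by (auto simp: card_insert_if split: if_splits)
qed

private lemma members: "i \<in> {1..3}" "j \<in> {1..3}" "k \<in> {1..3}"
  unfolding perm[symmetric] by simp_all

private lemma complements: "{1..3} - {i} = {j, k}" "{1..3} - {j, k} = {i}"
  "{1..3} - ({j} \<union> {i}) = {k}" "{1..3} - ({j, k} \<union> {i}) = {}"
  unfolding perm[symmetric] using distinct by auto

private lemma max_i: "measure M {\<omega> \<in> space M. X j \<omega> < X i \<omega> \<and> X k \<omega> < X i \<omega>}
    = pord M X j k i + pord M X k j i"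
  by (intro prob_max_of_three prob_space_axioms measurable_X AE_no_tie members distinct(3))

private lemma min_i: "measure M {\<omega> \<in> space M. X i \<omega> < X j \<omega> \<and> X i \<omega> < X k \<omega>}
    = pord M X i j k + pord M X i k j"
  by (intro prob_min_of_three prob_space_axioms measurable_X AE_no_tie members distinct(3))

lemma qset_singleton: "qset M X 3 {i} = pord M X j k i + pord M X k j i"
  unfolding qset_def complements max_i[symmetric] by (rule arg_cong[of _ _ "measure M"]) auto

lemma qset_pair: "qset M X 3 {j, k} = pord M X i j k + pord M X i k j"
  unfolding qset_def complements min_i[symmetric] by (rule arg_cong[of _ _ "measure M"]) auto

lemma qj_empty: "qj M X 3 i {} = pord M X j k i + pord M X k j i"
  unfolding qj_def Un_empty_left complements max_i[symmetric]
  by (rule arg_cong[of _ _ "measure M"]) auto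

lemma qj_singleton: "qj M X 3 i {j} = pord M X k i j"
  unfolding qj_def complements pord_def by (rule arg_cong[of _ _ "measure M"]) auto

lemma qj_pair: "qj M X 3 i {j, k} = pord M X i j k + pord M X i k j"
  unfolding qj_def complements min_i[symmetric] by (rule arg_cong[of _ _ "measure M"]) auto

end

lemmas q_values = qset_empty qset_all[of 3, unfolded one_to_three]
  qset_singleton[OF permutations_one_to_three(1)] qset_singleton[OF permutations_one_to_three(2)]
  qset_singleton[OF permutations_one_to_three(3)]
  qset_pair[OF permutations_one_to_three(1)] qset_pair[OF permutations_one_to_three(2)]
  qset_pair[OF permutations_one_to_three(3)]
  qj_empty[OF permutations_one_to_three(1)] qj_empty[OF permutations_one_to_three(2)]
  qj_empty[OF permutations_one_to_three(3)]
  qj_singleton[OF permutations_one_to_three(1)] qj_singleton[OF permutations_one_to_three(2)]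
  qj_singleton[OF permutations_one_to_three(3)] qj_singleton[OF permutations_one_to_three(4)]
  qj_singleton[OF permutations_one_to_three(5)] qj_singleton[OF permutations_one_to_three(6)]
  qj_pair[OF permutations_one_to_three(1)] qj_pair[OF permutations_one_to_three(2)]
  qj_pair[OF permutations_one_to_three(3)]

text \<open>q is symmetric (q(A) = 1/C(3,|A|)) iff the three "X_i is the maximum" and the three
  "X_i is the minimum" probabilities are all 1/3, i.e. iff the p's form the
  one-parameter family.\<close>

lemma q_symmetric_iff:
  "(\<forall>A. A \<subseteq> {1..3} \<longrightarrow> qset M X 3 A = 1 / real (3 choose card A)) \<longleftrightarrow>
   (\<exists>l::real. 0 \<le> l \<and> l \<le> 1 \<and>
      pord M X 1 2 3 = l / 3 \<and> pord M X 1 3 2 = (1 - l) / 3 \<and>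
      pord M X 2 1 3 = (1 - l) / 3 \<and> pord M X 2 3 1 = l / 3 \<and>
      pord M X 3 1 2 = l / 3 \<and> pord M X 3 2 1 = (1 - l) / 3)"
proof -
  have "(\<forall>A. A \<subseteq> {1..3} \<longrightarrow> qset M X 3 A = 1 / real (3 choose card A)) \<longleftrightarrow>
      pord M X 2 3 1 + pord M X 3 2 1 = 1/3 \<and> pord M X 1 3 2 + pord M X 3 1 2 = 1/3 \<and>
      pord M X 1 2 3 + pord M X 2 1 3 = 1/3 \<and> pord M X 3 1 2 + pord M X 3 2 1 = 1/3 \<and>
      pord M X 2 1 3 + pord M X 2 3 1 = 1/3 \<and> pord M X 1 2 3 + pord M X 1 3 2 = 1/3"
    unfolding one_to_three all_subsets_of_three q_values by (simp add: numeral_eq_Suc) blast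
  also have "\<dots> \<longleftrightarrow> (\<exists>l::real. 0 \<le> l \<and> l \<le> 1 \<and>
      pord M X 1 2 3 = l / 3 \<and> pord M X 1 3 2 = (1 - l) / 3 \<and>
      pord M X 2 1 3 = (1 - l) / 3 \<and> pord M X 2 3 1 = l / 3 \<and>
      pord M X 3 1 2 = l / 3 \<and> pord M X 3 2 1 = (1 - l) / 3)"
    by (rule pair_sums_third_iff) (simp_all add: pord_def)
  finally show ?thesis .
qed

text \<open>Since q_j({k}) is a single ordering probability for every ordered pair j, k,
  uniformity of all q_j forces every p_{ijk} to equal 1/6; conversely all q_j values
  are then sums of the right number of sixths.\<close>

lemma qj_uniform_iff:
  "(\<forall>j\<in>{1..3}. \<forall>A. A \<subseteq> {1..3} - {j} \<longrightarrow>
      qj M X 3 j A = 1 / (3 * real (2 choose card A))) \<longleftrightarrow>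
   (\<forall>i j k. {i, j, k} = {1..3::nat} \<longrightarrow> pord M X i j k = 1 / 6)"
proof -
  have complements: "{1..3} - {1} = {2, 3::nat}" "{1..3} - {2} = {1, 3::nat}"
    "{1..3} - {3} = {1, 2::nat}" by auto
  show ?thesis
    unfolding ball_one_to_three complements all_subsets_of_two all_permutations_of_three q_values
    by (simp add: numeral_eq_Suc) (intro iffI; elim conjE; intro conjI; linarith)
qed

end

theorem mainTheorem10:
  fixes M :: "'a measure" and X :: "nat \<Rightarrow> 'a \<Rightarrow> real"
  assumes "prob_space M"
    and meas: "\<And>i. i \<in> {1..3} \<Longrightarrow> X i \<in> borel_measurable M"
    and nonneg: "\<And>i \<omega>. i \<in> {1..3} \<Longrightarrow> \<omega> \<in> space M \<Longrightarrow> X i \<omega> \<ge> 0"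
    and noties: "\<And>i k. i \<in> {1..3} \<Longrightarrow> k \<in> {1..3} \<Longrightarrow> i \<noteq> k \<Longrightarrow>
                   measure M {\<omega> \<in> space M. X i \<omega> = X k \<omega>} = 0"
  shows "((\<forall>A. A \<subseteq> {1..3} \<longrightarrow> qset M X 3 A = 1 / real (3 choose card A)) \<longleftrightarrow>
           (\<exists>l::real. 0 \<le> l \<and> l \<le> 1 \<and>
              pord M X 1 2 3 = l / 3 \<and> pord M X 1 3 2 = (1 - l) / 3 \<and>
              pord M X 2 1 3 = (1 - l) / 3 \<and> pord M X 2 3 1 = l / 3 \<and>
              pord M X 3 1 2 = l / 3 \<and> pord M X 3 2 1 = (1 - l) / 3))
       \<and> ((\<forall>j\<in>{1..3}. \<forall>A. A \<subseteq> {1..3} - {j} \<longrightarrow>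
              qj M X 3 j A = 1 / (3 * real (2 choose card A))) \<longleftrightarrow>
           (\<forall>i j k. {i, j, k} = {1..3::nat} \<longrightarrow> pord M X i j k = 1 / 6))"
proof -
  interpret three_no_ties M X
    by (rule three_no_ties.intro[OF assms(1) three_no_ties_axioms.intro[OF meas noties]])
  show ?thesis
    using q_symmetric_iff qj_uniform_iff by blast
qed

end
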